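(* Let $\mathbb F$ be any field, $n\ge k>1$, and let $\mathcal K\subseteq M_{n\times k}(\mathbb F)$ be a linear variety with $\operatorname{codim}(\mathcal K)=k$ such that $\det_{n,k}(X)=0$ for all $X\in\mathcal K$. Let $B^*\subseteq[n]\times[k]$ be a cobasis of $\mathcal M(\mathcal K)$. If there is $1\le j'\le k$ with $B^*\cap([n]\times\{j'\})=\varnothing$, then $|B^*\cap(\{i\}\times[k])|\le 1$ for all $1\le i\le n$.
   Context: A linear variety is a nonempty set $\mathbf s+V$ with $V$ a linear subspace (uniquely determined); codimension is ambient dimension minus $\dim V$. Identify $M_{n\times k}(\mathbb F)$ with $\mathbb F^{[n]\times[k]}$, $(i,j)$ indexing row $i$, column $j$. Matroid $\mathcal M(\mathcal K)$ of $\mathcal K=\mathbf s+V\subseteq\mathbb F^E$: the matroid on $E$ with rank function $r(S)=\dim\operatorname{span}\{x_e|_V:e\in S\}$, $x_e$ the coordinate functionals. A cobasis is the complement of a basis (maximal independent set). Cullis' determinant: $\det_{n,k}(X)=\sum_{c}\operatorname{sgn}(c)\det(X[c|))$, sum over $k$-subsets $c=\{c(1)<\dots<c(k)\}$ of $[n]$, $X[c|)$ the submatrix of rows in $c$, $\operatorname{sgn}(c)=(-1)^{\sum_\alpha(c(\alpha)-\alpha)}$. *)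

theory Defs
  imports Main "HOL-Library.Function_Algebras" "Jordan_Normal_Form.Determinant"
begin

text \<open>Ground set E = [n] x [k] (1-based: (i,j) = row i, column j).\<close>
definition grid :: "nat \<Rightarrow> nat \<Rightarrow> (nat \<times> nat) set" where
  "grid n k = {1..n} \<times> {1..k}"

text \<open>F^E realised as functions vanishing outside E.\<close>
definition fn_space :: "'b set \<Rightarrow> ('b \<Rightarrow> 'a::zero) set" where
  "fn_space E = {f. \<forall>x. x \<notin> E \<longrightarrow> f x = 0}"

definition fscale :: "'a::field \<Rightarrow> ('b \<Rightarrow> 'a) \<Rightarrow> ('b \<Rightarrow> 'a)" where
  "fscale c f = (\<lambda>x. c * f x)"

definition lin_subspace_of :: "'b set \<Rightarrow> ('b \<Rightarrow> 'a::field) set \<Rightarrow> bool" where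
  "lin_subspace_of E V \<longleftrightarrow> V \<subseteq> fn_space E \<and> module.subspace fscale V"

definition lin_variety :: "'b set \<Rightarrow> ('b \<Rightarrow> 'a::field) \<Rightarrow> ('b \<Rightarrow> 'a) set \<Rightarrow> ('b \<Rightarrow> 'a) set" where
  "lin_variety E s V = (\<lambda>v. s + v) ` V"

definition vdim :: "('b \<Rightarrow> 'a::field) set \<Rightarrow> nat" where
  "vdim V = vector_space.dim fscale V"

definition coord_restr :: "('b \<Rightarrow> 'a::field) set \<Rightarrow> 'b \<Rightarrow> (('b \<Rightarrow> 'a) \<Rightarrow> 'a)" where
  "coord_restr V e = (\<lambda>v. if v \<in> V then v e else 0)"

text \<open>Rank function of the matroid M(K), K = s + V.\<close>
definition mrank :: "('b \<Rightarrow> 'a::field) set \<Rightarrow> 'b set \<Rightarrow> nat" where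
  "mrank V S = vector_space.dim fscale (coord_restr V ` S)"

definition m_indep :: "'b set \<Rightarrow> ('b \<Rightarrow> 'a::field) set \<Rightarrow> 'b set \<Rightarrow> bool" where
  "m_indep E V S \<longleftrightarrow> S \<subseteq> E \<and> mrank V S = card S"

definition m_basis :: "'b set \<Rightarrow> ('b \<Rightarrow> 'a::field) set \<Rightarrow> 'b set \<Rightarrow> bool" where
  "m_basis E V B \<longleftrightarrow> m_indep E V B \<and> (\<forall>S. B \<subset> S \<and> S \<subseteq> E \<longrightarrow> \<not> m_indep E V S)"

definition m_cobasis :: "'b set \<Rightarrow> ('b \<Rightarrow> 'a::field) set \<Rightarrow> 'b set \<Rightarrow> bool" where
  "m_cobasis E V C \<longleftrightarrow> (\<exists>B. m_basis E V B \<and> C = E - B)"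

text \<open>Cullis' determinant of an n x k matrix X (entries X (i,j), 1-based).
  For a k-subset c of [n], c(a+1) = sorted_list_of_set c ! a.\<close>
definition cullis_det :: "nat \<Rightarrow> nat \<Rightarrow> (nat \<times> nat \<Rightarrow> 'a::comm_ring_1) \<Rightarrow> 'a" where
  "cullis_det n k X =
     (\<Sum>c\<in>{c. c \<subseteq> {1..n} \<and> card c = k}.
        (- 1) ^ (\<Sum>a<k. sorted_list_of_set c ! a - (a + 1))
        * det (mat k k (\<lambda>(a, b). X (sorted_list_of_set c ! a, b + 1))))"

end

theory Submission
  imports Defs
begin

(* If B is a basis of M(K), the coordinate functionals indexed by B are independent on V, so
   V contains a dual family for them: the entries of K at B can be prescribed arbitrarily, and
   since they determine the elements of V, dim V <= |B|.  Hence K is free outside the cobasis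
   B*, and |B*| <= k.
   Cullis' determinant expands along a column equal to the unit vector e_i as (-1)^(i+j) times
   the Cullis determinant of the matrix with row i and column j deleted.  Prescribing such a
   column j that avoids B* passes to a family of (n-1) x (k-1) matrices that is free outside
   the image of B* minus its row i.  By induction, a family of n x k matrices free outside fewer
   than k positions contains a matrix with nonzero Cullis determinant.  So if row i met B*
   twice while column j' avoids B*, expanding along (i, j') would leave fewer than k-1
   positions, contradicting the vanishing of Cullis' determinant on K. *)

section \<open>Laplace expansion of Cullis' determinant along a unit column\<close>

(* insert_index i skips the value i, so it also works on the 1-based indices used here. *)
definition delete_row_col :: "nat \<Rightarrow> nat \<Rightarrow> (nat \<times> nat \<Rightarrow> 'a) \<Rightarrow> nat \<times> nat \<Rightarrow> 'a" where
  "delete_row_col i j X = (\<lambda>(a, b). X (insert_index i a, insert_index j b))"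

definition cullis_term :: "nat \<Rightarrow> (nat \<times> nat \<Rightarrow> 'a::comm_ring_1) \<Rightarrow> nat set \<Rightarrow> 'a" where
  "cullis_term k X c =
     (- 1) ^ (\<Sum>a<k. sorted_list_of_set c ! a - (a + 1))
     * det (mat k k (\<lambda>(a, b). X (sorted_list_of_set c ! a, b + 1)))"

lemma cullis_det_eq_sum_cullis_term:
  "cullis_det n k X = (\<Sum>c\<in>{c. c \<subseteq> {1..n} \<and> card c = k}. cullis_term k X c)"
  unfolding cullis_det_def cullis_term_def ..

lemma cullis_det_0: "cullis_det n 0 X = 1"
proof -
  have "{c. c \<subseteq> {1..n} \<and> card c = 0} = {{}}"
    by (auto dest: finite_subset)
  then show ?thesis
    by (simp add: cullis_det_eq_sum_cullis_term cullis_term_def)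
qed

lemma minus_one_power_cullis_exponent:
  assumes "sorted_wrt (<) xs" and "0 \<notin> set xs"
  shows "(- 1 :: 'a::comm_ring_1) ^ (\<Sum>a<length xs. xs ! a - (a + 1))
    = (- 1) ^ (sum_list xs + (\<Sum>a<length xs. a + 1))"
proof -
  let ?E = "\<Sum>a<length xs. xs ! a - (a + 1)" and ?T = "\<Sum>a<length xs. a + 1"
  have "sorted_wrt (<) (0 # xs)"
    using assms by (auto intro: gr0I)
  then have ge: "a + 1 \<le> xs ! a" if "a < length xs" for a
    using sorted_wrt_less_idx[of "0 # xs" "Suc a"] that by simp
  have "?E + ?T = (\<Sum>a<length xs. xs ! a)"
    unfolding sum.distrib[symmetric]
    by (intro sum.cong refl) (metis ge lessThan_iff le_add_diff_inverse2)
  also have "\<dots> = sum_list xs"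
    by (simp add: sum_list_sum_nth atLeast0LessThan)
  finally have "sum_list xs + ?T = ?E + 2 * ?T"
    by simp
  then have "(- 1 :: 'a) ^ (sum_list xs + ?T) = (- 1) ^ ?E * ((- 1) ^ 2) ^ ?T"
    by (simp only: power_add power_mult)
  then show ?thesis
    by simp
qed

lemma card_insert_insert_index_image:
  assumes "finite c"
  shows "card (insert i (insert_index i ` c)) = Suc (card c)"
proof -
  have "i \<notin> insert_index i ` c"
    using insert_index_exclude by (metis imageE)
  then show ?thesis
    using assms by (simp add: card_image insert_index_inj_on)
qed

lemma bij_betw_insert_insert_index_image:
  assumes "i \<in> {1..n}"
  shows "bij_betw (\<lambda>c. insert i (insert_index i ` c))
    {c. c \<subseteq> {1..n - 1} \<and> card c = k} {c. c \<subseteq> {1..n} \<and> card c = Suc k \<and> i \<in> c}"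
proof (rule bij_betw_byWitness[where f' = "\<lambda>c. delete_index i ` (c - {i})"])
  show "\<forall>c\<in>{c. c \<subseteq> {1..n - 1} \<and> card c = k}.
      delete_index i ` (insert i (insert_index i ` c) - {i}) = c"
  proof
    fix c :: "nat set"
    have "insert i (insert_index i ` c) - {i} = insert_index i ` c"
      by auto
    then show "delete_index i ` (insert i (insert_index i ` c) - {i}) = c"
      by (simp add: image_image)
  qed
  show "\<forall>c\<in>{c. c \<subseteq> {1..n} \<and> card c = Suc k \<and> i \<in> c}.
      insert i (insert_index i ` delete_index i ` (c - {i})) = c"
    by (auto simp: image_image insert_delete_index insert_absorb)
  show "(\<lambda>c. insert i (insert_index i ` c)) ` {c. c \<subseteq> {1..n - 1} \<and> card c = k}
      \<subseteq> {c. c \<subseteq> {1..n} \<and> card c = Suc k \<and> i \<in> c}"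
  proof clarify
    fix c assume c: "c \<subseteq> {1..n - 1}" "k = card c"
    then have "card (insert i (insert_index i ` c)) = Suc k"
      by (simp add: card_insert_insert_index_image finite_subset)
    moreover have "insert i (insert_index i ` c) \<subseteq> {1..n}"
      using c assms by (auto simp: insert_index_def)
    ultimately show "insert i (insert_index i ` c) \<subseteq> {1..n}
        \<and> card (insert i (insert_index i ` c)) = Suc (card c) \<and> i \<in> insert i (insert_index i ` c)"
      using c by simp
  qed
  show "(\<lambda>c. delete_index i ` (c - {i})) ` {c. c \<subseteq> {1..n} \<and> card c = Suc k \<and> i \<in> c}
      \<subseteq> {c. c \<subseteq> {1..n - 1} \<and> card c = k}"
  proof clarify
    fix c assume c: "c \<subseteq> {1..n}" "card c = Suc k" "i \<in> c"
    then have "card (delete_index i ` (c - {i})) = k"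
      by (simp add: card_image delete_index_inj_on)
    moreover have "delete_index i ` (c - {i}) \<subseteq> {1..n - 1}"
      using c assms by (auto simp: delete_index_def subset_iff)
    ultimately show "delete_index i ` (c - {i}) \<subseteq> {1..n - 1} \<and> card (delete_index i ` (c - {i})) = k"
      by simp
  qed
qed

lemma le_of_mem_dropWhile_less:
  "sorted xs \<Longrightarrow> x \<in> set (dropWhile (\<lambda>x. x < i) xs) \<Longrightarrow> i \<le> x"
  for i :: "'a::linorder"
  by (induction xs) (auto split: if_splits)

lemma sorted_list_of_set_insert_insert_index_image:
  assumes "finite c"
  defines "xs \<equiv> sorted_list_of_set c"
  shows "sorted_list_of_set (insert i (insert_index i ` c)) =
    takeWhile (\<lambda>x. x < i) xs @ i # map Suc (dropWhile (\<lambda>x. x < i) xs)"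
    (is "_ = ?P @ i # map Suc ?Q")
proof -
  have sorted: "sorted_wrt (<) xs"
    unfolding xs_def by (rule strict_sorted_list_of_set)
  have P: "x < i" if "x \<in> set ?P" for x
    using that by (auto dest: set_takeWhileD)
  have Q: "i \<le> x" if "x \<in> set ?Q" for x
    using that sorted le_of_mem_dropWhile_less by (auto simp: strict_sorted_iff)
  have "set xs = c"
    unfolding xs_def using assms(1) by simp
  then have "c = set ?P \<union> set ?Q"
    by (metis set_append takeWhile_dropWhile_id)
  then have "insert_index i ` c = set ?P \<union> Suc ` set ?Q"
    using P Q by (force simp: insert_index_def)
  then have "set (?P @ i # map Suc ?Q) = insert i (insert_index i ` c)"
    by auto
  moreover have "sorted_wrt (<) (?P @ i # map Suc ?Q)"
  proof -
    have "sorted_wrt (<) (i # map Suc ?Q)"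
      using sorted Q by (auto simp: sorted_wrt_map intro: le_imp_less_Suc)
    moreover have "x < y" if "x \<in> set ?P" and "y \<in> set (i # map Suc ?Q)" for x y
      using that(2) P[OF that(1)] by (auto dest!: Q)
    ultimately show ?thesis
      using sorted by (simp add: sorted_wrt_append)
  qed
  ultimately show ?thesis
    using sorted_list_of_set.idem_if_sorted_distinct[of "?P @ i # map Suc ?Q"]
    by (simp add: strict_sorted_iff)
qed

lemma nth_sorted_list_of_set_insert_insert_index_image:
  fixes i :: nat
  assumes "finite c"
  defines "xs \<equiv> sorted_list_of_set c" and "ys \<equiv> sorted_list_of_set (insert i (insert_index i ` c))"
  obtains \<alpha> where "\<alpha> \<le> length xs" and "ys ! \<alpha> = i"
    and "\<And>a. a < length xs \<Longrightarrow> ys ! insert_index \<alpha> a = insert_index i (xs ! a)"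
    and "sum_list ys = sum_list xs + i + (length xs - \<alpha>)"
proof
  let ?P = "takeWhile (\<lambda>x. x < i) xs" and ?Q = "dropWhile (\<lambda>x. x < i) xs"
  have ys: "ys = ?P @ i # map Suc ?Q" and xs: "xs = ?P @ ?Q"
    unfolding ys_def xs_def using sorted_list_of_set_insert_insert_index_image[OF assms(1)] by simp_all
  have sorted: "sorted xs"
    unfolding xs_def by simp
  have length_xs: "length xs = length ?P + length ?Q"
    using length_append[of ?P ?Q] by simp
  show "length ?P \<le> length xs" "ys ! length ?P = i"
    unfolding ys by (simp_all add: length_takeWhile_le)
  show "ys ! insert_index (length ?P) a = insert_index i (xs ! a)" if "a < length xs" for a
  proof (cases "a < length ?P")
    case True
    then have "?P ! a = xs ! a" and "?P ! a < i"
      using takeWhile_nth[OF True] set_takeWhileD[OF nth_mem[OF True]] by simp_all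
    then show ?thesis
      using True by (simp add: ys nth_append)
  next
    case False
    have in_Q: "a - length ?P < length ?Q"
      using False that length_xs by simp
    then have "?Q ! (a - length ?P) = xs ! a"
      using False by (simp add: dropWhile_nth)
    moreover have "i \<le> ?Q ! (a - length ?P)"
      using le_of_mem_dropWhile_less[OF sorted nth_mem[OF in_Q]] .
    ultimately show ?thesis
      using False in_Q by (simp add: ys nth_append Suc_diff_le)
  qed
  have "sum_list (map Suc zs) = sum_list zs + length zs" for zs :: "nat list"
    by (induction zs) auto
  moreover have "sum_list xs = sum_list ?P + sum_list ?Q"
    using sum_list_append[of ?P ?Q] by simp
  ultimately show "sum_list ys = sum_list xs + i + (length xs - length ?P)"
    using length_xs by (simp add: ys)
qed

lemma det_unit_column:
  fixes A :: "'a::comm_ring_1 mat"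
  assumes A: "A \<in> carrier_mat n n" and "j < n" and "\<alpha> < n"
    and unit: "\<And>a. a < n \<Longrightarrow> A $$ (a, j) = (if a = \<alpha> then 1 else 0)"
  shows "det A = (- 1) ^ (\<alpha> + j) * det (mat_delete A \<alpha> j)"
proof -
  have "det A = (\<Sum>a<n. A $$ (a, j) * cofactor A a j)"
    by (rule laplace_expansion_column[OF A \<open>j < n\<close>])
  also have "\<dots> = (\<Sum>a<n. if a = \<alpha> then cofactor A a j else 0)"
    by (rule sum.cong) (simp_all add: unit)
  also have "\<dots> = cofactor A \<alpha> j"
    using \<open>\<alpha> < n\<close> by simp
  finally show ?thesis
    unfolding cofactor_def .
qed

lemma det_zero_column:
  fixes A :: "'a::comm_ring_1 mat"
  assumes A: "A \<in> carrier_mat n n" and "j < n" and "\<And>a. a < n \<Longrightarrow> A $$ (a, j) = 0"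
  shows "det A = 0"
  using laplace_expansion_column[OF A \<open>j < n\<close>] assms(3) by simp

lemma cullis_term_eq_0_if_zero_column:
  assumes "finite c" and "card c = k" and j: "1 \<le> j" "j \<le> k"
    and zero: "\<And>r. r \<in> c \<Longrightarrow> X (r, j) = 0"
  shows "cullis_term k X c = 0"
proof -
  have "det (mat k k (\<lambda>(a, b). X (sorted_list_of_set c ! a, b + 1))) = 0"
  proof (rule det_zero_column)
    show "j - 1 < k"
      using j by simp
    fix a assume "a < k"
    then have "sorted_list_of_set c ! a \<in> c"
      using assms(1,2) by (metis length_sorted_list_of_set nth_mem set_sorted_list_of_set)
    then show "mat k k (\<lambda>(a, b). X (sorted_list_of_set c ! a, b + 1)) $$ (a, j - 1) = 0"
      using \<open>a < k\<close> j zero by auto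
  qed simp
  then show ?thesis
    by (simp add: cullis_term_def)
qed

lemma minus_one_power_cullis_exponent_insert:
  assumes "sorted_wrt (<) xs" and "sorted_wrt (<) ys" and "0 \<notin> set xs" and "0 \<notin> set ys"
    and "length ys = Suc (length xs)" and "\<alpha> \<le> length xs"
    and "sum_list ys = sum_list xs + i + (length xs - \<alpha>)" and "1 \<le> j"
  shows "(- 1 :: 'a::comm_ring_1) ^ (\<Sum>a<length ys. ys ! a - (a + 1)) * (- 1) ^ (\<alpha> + (j - 1))
    = (- 1) ^ (i + j) * (- 1) ^ (\<Sum>a<length xs. xs ! a - (a + 1))"
proof -
  have exponent: "sum_list ys + (\<Sum>a<length ys. a + 1) + (\<alpha> + (j - 1))
      = i + j + (sum_list xs + (\<Sum>a<length xs. a + 1)) + 2 * length xs"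
    using assms(5-8) by simp
  show ?thesis
    unfolding minus_one_power_cullis_exponent[OF assms(1,3)] minus_one_power_cullis_exponent[OF assms(2,4)]
      power_add[symmetric] exponent
    by (simp add: power_add power_mult)
qed

lemma mat_delete_rows_insert_index:
  assumes "\<alpha> \<le> length xs" and "length xs = k" and "1 \<le> j"
    and ys: "\<And>a. a < length xs \<Longrightarrow> ys ! insert_index \<alpha> a = insert_index i (xs ! a)"
  shows "mat_delete (mat (Suc k) (Suc k) (\<lambda>(a, b). X (ys ! a, b + 1))) \<alpha> (j - 1)
    = mat k k (\<lambda>(a, b). delete_row_col i j X (xs ! a, b + 1))"
proof (rule eq_matI)
  fix a b assume "a < dim_row (mat k k (\<lambda>(a, b). delete_row_col i j X (xs ! a, b + 1)))"
    and "b < dim_col (mat k k (\<lambda>(a, b). delete_row_col i j X (xs ! a, b + 1)))"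
  then have "a < k" and "b < k"
    by simp_all
  moreover have "insert_index (j - 1) b + 1 = insert_index j (b + 1)"
    using assms(3) by (auto simp: insert_index_def)
  ultimately show "mat_delete (mat (Suc k) (Suc k) (\<lambda>(a, b). X (ys ! a, b + 1))) \<alpha> (j - 1) $$ (a, b)
      = mat k k (\<lambda>(a, b). delete_row_col i j X (xs ! a, b + 1)) $$ (a, b)"
    using assms(1,2) ys by (simp add: mat_delete_def delete_row_col_def insert_index_def)
qed simp_all

lemma cullis_term_insert_insert_index_image:
  fixes X :: "nat \<times> nat \<Rightarrow> 'a::comm_ring_1"
  assumes "finite c" and "card c = k" and "0 \<notin> c" and "0 < i" and j: "1 \<le> j" "j \<le> Suc k"
    and unit: "\<And>r. r \<in> insert i (insert_index i ` c) \<Longrightarrow> X (r, j) = (if r = i then 1 else 0)"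
  shows "cullis_term (Suc k) X (insert i (insert_index i ` c))
    = (- 1) ^ (i + j) * cullis_term k (delete_row_col i j X) c"
proof -
  define xs where "xs = sorted_list_of_set c"
  define ys where "ys = sorted_list_of_set (insert i (insert_index i ` c))"
  obtain \<alpha> where "\<alpha> \<le> length xs" and ys_\<alpha>: "ys ! \<alpha> = i"
    and ys_insert_index: "\<And>a. a < length xs \<Longrightarrow> ys ! insert_index \<alpha> a = insert_index i (xs ! a)"
    and sum_list_ys: "sum_list ys = sum_list xs + i + (length xs - \<alpha>)"
    using nth_sorted_list_of_set_insert_insert_index_image[OF \<open>finite c\<close>, where i = i,
        folded ys_def xs_def] by blast
  have length_xs: "length xs = k"
    using assms(2) by (simp add: xs_def)
  have length_ys: "length ys = Suc k"
    using assms(1,2) by (metis card_insert_insert_index_image length_sorted_list_of_set ys_def)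
  have set_ys: "set ys = insert i (insert_index i ` c)"
    unfolding ys_def by (rule set_sorted_list_of_set) (use assms(1) in simp)
  let ?M = "mat (Suc k) (Suc k) (\<lambda>(a, b). X (ys ! a, b + 1))"
  have "ys ! a = i \<longleftrightarrow> a = \<alpha>" if "a < Suc k" for a
    using nth_eq_iff_index_eq[of ys a \<alpha>] that length_ys length_xs \<open>\<alpha> \<le> length xs\<close> ys_\<alpha>
    by (simp add: ys_def)
  then have "X (ys ! a, j) = (if a = \<alpha> then 1 else 0)" if "a < Suc k" for a
    using unit[of "ys ! a"] that length_ys set_ys by (metis nth_mem)
  then have "det ?M = (- 1) ^ (\<alpha> + (j - 1)) * det (mat_delete ?M \<alpha> (j - 1))"
    using j \<open>\<alpha> \<le> length xs\<close> length_xs by (intro det_unit_column) auto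
  also have "mat_delete ?M \<alpha> (j - 1) = mat k k (\<lambda>(a, b). delete_row_col i j X (xs ! a, b + 1))"
    using \<open>\<alpha> \<le> length xs\<close> length_xs j(1) ys_insert_index by (rule mat_delete_rows_insert_index)
  finally have det: "det ?M
      = (- 1) ^ (\<alpha> + (j - 1)) * det (mat k k (\<lambda>(a, b). delete_row_col i j X (xs ! a, b + 1)))" .
  have "0 \<notin> set xs" and "0 \<notin> set ys"
    using assms(1,3,4) set_ys by (auto simp: xs_def insert_index_def)
  then have sign: "(- 1 :: 'a) ^ (\<Sum>a<Suc k. ys ! a - (a + 1)) * (- 1) ^ (\<alpha> + (j - 1))
      = (- 1) ^ (i + j) * (- 1) ^ (\<Sum>a<k. xs ! a - (a + 1))"
    using minus_one_power_cullis_exponent_insert[of xs ys \<alpha> i j] length_xs length_ys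
      \<open>\<alpha> \<le> length xs\<close> sum_list_ys j by (simp add: xs_def ys_def)
  show ?thesis
    unfolding cullis_term_def xs_def[symmetric] ys_def[symmetric]
    by (simp only: det mult.assoc[symmetric] sign)
qed

lemma cullis_det_unit_column:
  fixes X :: "nat \<times> nat \<Rightarrow> 'a::comm_ring_1"
  assumes i: "i \<in> {1..n}" and j: "1 \<le> j" "j \<le> Suc k"
    and unit: "\<forall>r\<in>{1..n}. X (r, j) = (if r = i then 1 else 0)"
  shows "cullis_det n (Suc k) X = (- 1) ^ (i + j) * cullis_det (n - 1) k (delete_row_col i j X)"
proof -
  let ?C = "{c. c \<subseteq> {1..n} \<and> card c = Suc k}"
  let ?C\<^sub>i = "{c. c \<subseteq> {1..n} \<and> card c = Suc k \<and> i \<in> c}"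
  let ?C' = "{c. c \<subseteq> {1..n - 1} \<and> card c = k}"
  have "cullis_det n (Suc k) X = (\<Sum>c\<in>?C. cullis_term (Suc k) X c)"
    by (rule cullis_det_eq_sum_cullis_term)
  also have "\<dots> = (\<Sum>c\<in>?C\<^sub>i. cullis_term (Suc k) X c)"
  proof (rule sum.mono_neutral_right)
    show "finite ?C"
      by (rule finite_subset[of _ "Pow {1..n}"]) auto
    show "\<forall>c\<in>?C - ?C\<^sub>i. cullis_term (Suc k) X c = 0"
      using unit j by (auto intro!: cullis_term_eq_0_if_zero_column[where j = j] dest: finite_subset)
  qed blast
  also have "\<dots> = (\<Sum>c\<in>?C'. cullis_term (Suc k) X (insert i (insert_index i ` c)))"
    by (rule sum.reindex_bij_betw[symmetric, OF bij_betw_insert_insert_index_image[OF i]])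
  also have "\<dots> = (\<Sum>c\<in>?C'. (- 1) ^ (i + j) * cullis_term k (delete_row_col i j X) c)"
  proof (rule sum.cong[OF refl])
    fix c assume "c \<in> ?C'"
    then show "cullis_term (Suc k) X (insert i (insert_index i ` c))
        = (- 1) ^ (i + j) * cullis_term k (delete_row_col i j X) c"
      using i j unit
      by (intro cullis_term_insert_insert_index_image) (auto dest: finite_subset simp: insert_index_def)
  qed
  also have "\<dots> = (- 1) ^ (i + j) * cullis_det (n - 1) k (delete_row_col i j X)"
    by (simp add: cullis_det_eq_sum_cullis_term sum_distrib_left)
  finally show ?thesis .
qed

section \<open>Bases of the matroid of a subspace\<close>

lemma vector_space_fscale: "vector_space (fscale :: 'a::field \<Rightarrow> ('b \<Rightarrow> 'a) \<Rightarrow> 'b \<Rightarrow> 'a)"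
  unfolding vector_space_def fscale_def by (auto simp: fun_eq_iff algebra_simps)

interpretation fscale: vector_space "fscale :: 'a::field \<Rightarrow> ('b \<Rightarrow> 'a) \<Rightarrow> 'b \<Rightarrow> 'a"
  by (rule vector_space_fscale)

lemma sum_apply: "sum f A x = (\<Sum>a\<in>A. f a x)"
  by (induction A rule: infinite_finite_induct) auto

lemma fscale_apply [simp]: "fscale c f x = c * f x"
  by (simp add: fscale_def)

lemma (in vector_space) independent_if_dim_eq_card:
  assumes "finite S" and "dim S = card S"
  shows "independent S"
proof -
  obtain A where "A \<subseteq> S" and "independent A" and "S \<subseteq> span A"
    by (rule maximal_independent_subset)
  then have "card A = card S"
    using basis_card_eq_dim assms(2) by simp
  then have "A = S"
    using \<open>A \<subseteq> S\<close> assms(1) by (simp add: card_subset_eq)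
  then show ?thesis
    using \<open>independent A\<close> by simp
qed

definition coords_independent_on :: "('b \<Rightarrow> 'a::field) set \<Rightarrow> 'b set \<Rightarrow> bool" where
  "coords_independent_on V B \<longleftrightarrow>
     (\<forall>\<mu>. (\<forall>v\<in>V. (\<Sum>b\<in>B. \<mu> b * v b) = 0) \<longrightarrow> (\<forall>b\<in>B. \<mu> b = 0))"

definition dual_family_on :: "('b \<Rightarrow> 'a::field) set \<Rightarrow> 'b set \<Rightarrow> ('b \<Rightarrow> 'b \<Rightarrow> 'a) \<Rightarrow> bool" where
  "dual_family_on V B w \<longleftrightarrow> (\<forall>b\<in>B. w b \<in> V \<and> (\<forall>b'\<in>B. w b b' = (if b' = b then 1 else 0)))"

lemma coords_independent_on_subset:
  assumes indep: "coords_independent_on V B" and "B' \<subseteq> B" and "finite B"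
  shows "coords_independent_on V B'"
  unfolding coords_independent_on_def
proof (intro allI impI)
  fix \<mu> assume vanish: "\<forall>v\<in>V. (\<Sum>b\<in>B'. \<mu> b * v b) = 0"
  define \<mu>' where "\<mu>' b = (if b \<in> B' then \<mu> b else 0)" for b
  have "(\<Sum>b\<in>B. \<mu>' b * v b) = (\<Sum>b\<in>B'. \<mu> b * v b)" for v
    by (rule sum.mono_neutral_cong_right) (use assms(2,3) in \<open>auto simp: \<mu>'_def\<close>)
  then have "\<forall>b\<in>B. \<mu>' b = 0"
    using indep vanish unfolding coords_independent_on_def by simp
  then show "\<forall>b\<in>B'. \<mu> b = 0"
    using assms(2) unfolding \<mu>'_def by (metis subsetD)
qed

lemma dual_family_on_sum_apply:
  assumes "dual_family_on V B w" and "finite B" and "b' \<in> B"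
  shows "(\<Sum>b\<in>B. fscale (y b) (w b)) b' = y b'"
proof -
  have "(\<Sum>b\<in>B. fscale (y b) (w b)) b' = (\<Sum>b\<in>B. if b = b' then y b else 0)"
    unfolding sum_apply by (rule sum.cong) (use assms in \<open>auto simp: dual_family_on_def\<close>)
  then show ?thesis
    using assms(2,3) by simp
qed

lemma dual_family_on_residual:
  assumes V: "fscale.subspace V" and "finite B" and w: "dual_family_on V B w" and "v \<in> V"
  shows "v - (\<Sum>b\<in>B. fscale (v b) (w b)) \<in> V"
    and "\<forall>b\<in>B. (v - (\<Sum>b\<in>B. fscale (v b) (w b))) b = 0"
proof -
  have "(\<Sum>b\<in>B. fscale (v b) (w b)) \<in> V"
    using w V by (auto simp: dual_family_on_def intro!: fscale.subspace_sum fscale.subspace_scale)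
  with V \<open>v \<in> V\<close> show "v - (\<Sum>b\<in>B. fscale (v b) (w b)) \<in> V"
    by (rule fscale.subspace_diff)
  show "\<forall>b\<in>B. (v - (\<Sum>b\<in>B. fscale (v b) (w b))) b = 0"
    using dual_family_on_sum_apply[OF w \<open>finite B\<close>] by simp
qed

lemma coords_independent_on_insert_obtains_separating:
  assumes V: "fscale.subspace V" and "finite F" and "x \<notin> F"
    and indep: "coords_independent_on V (insert x F)" and w: "dual_family_on V F w"
  obtains u where "u \<in> V" and "\<forall>b\<in>F. u b = 0" and "u x = 1"
proof -
  have "\<exists>u\<in>V. (\<forall>b\<in>F. u b = 0) \<and> u x \<noteq> 0"
  proof (rule ccontr)
    assume "\<not> ?thesis"
    then have "(v - (\<Sum>b\<in>F. fscale (v b) (w b))) x = 0" if "v \<in> V" for v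
      using dual_family_on_residual[OF V \<open>finite F\<close> w that] by blast
    then have "v x = (\<Sum>b\<in>F. v b * w b x)" if "v \<in> V" for v
      using that by (simp add: sum_apply)
    moreover define \<mu> where "\<mu> b = (if b = x then - 1 else w b x)" for b
    have "(\<Sum>b\<in>insert x F. \<mu> b * v b) = - v x + (\<Sum>b\<in>F. v b * w b x)" for v
    proof -
      have "(\<Sum>b\<in>F. \<mu> b * v b) = (\<Sum>b\<in>F. v b * w b x)"
        by (rule sum.cong) (use \<open>x \<notin> F\<close> in \<open>auto simp: \<mu>_def\<close>)
      then show ?thesis
        using \<open>finite F\<close> \<open>x \<notin> F\<close> by (simp add: \<mu>_def)
    qed
    ultimately have "\<forall>v\<in>V. (\<Sum>b\<in>insert x F. \<mu> b * v b) = 0"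
      by simp
    then have "\<mu> x = 0"
      using indep unfolding coords_independent_on_def by blast
    then show False
      by (simp add: \<mu>_def)
  qed
  then obtain u where "u \<in> V" and "\<forall>b\<in>F. u b = 0" and "u x \<noteq> 0"
    by blast
  then show ?thesis
    using V by (intro that[of "fscale (inverse (u x)) u"]) (simp_all add: fscale.subspace_scale)
qed

lemma dual_family_on_insert:
  assumes V: "fscale.subspace V" and "finite F" and "x \<notin> F"
    and indep: "coords_independent_on V (insert x F)" and w: "dual_family_on V F w"
  obtains w' where "dual_family_on V (insert x F) w'"
proof -
  obtain u where "u \<in> V" and u_F: "\<forall>b\<in>F. u b = 0" and "u x = 1"
    using coords_independent_on_insert_obtains_separating[OF assms] .
  define w' where "w' b = (if b = x then u else w b - fscale (w b x) u)" for b
  have "dual_family_on V (insert x F) w'"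
    unfolding dual_family_on_def
  proof
    fix b assume "b \<in> insert x F"
    then consider "b = x" | "b \<in> F" "b \<noteq> x"
      by blast
    then show "w' b \<in> V \<and> (\<forall>b'\<in>insert x F. w' b b' = (if b' = b then 1 else 0))"
    proof cases
      case 1
      then show ?thesis
        using \<open>u \<in> V\<close> u_F \<open>u x = 1\<close> \<open>x \<notin> F\<close> by (auto simp: w'_def)
    next
      case 2
      then show ?thesis
        using w \<open>u \<in> V\<close> u_F \<open>u x = 1\<close> \<open>x \<notin> F\<close> V
        by (auto simp: w'_def dual_family_on_def intro!: fscale.subspace_diff fscale.subspace_scale)
    qed
  qed
  then show ?thesis
    by (rule that)
qed

lemma dual_family_on_exists:
  assumes V: "fscale.subspace V" and "finite B" and "coords_independent_on V B"
  obtains w where "dual_family_on V B w"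
  using assms(2,3)
proof (induction B arbitrary: thesis rule: finite_induct)
  case empty
  then show ?case
    by (simp add: dual_family_on_def)
next
  case (insert x F)
  obtain w where "dual_family_on V F w"
    using insert.IH coords_independent_on_subset[OF insert.prems(2)] insert.hyps(1) by blast
  then show ?case
    using dual_family_on_insert[OF V insert.hyps insert.prems(2)] insert.prems(1) by blast
qed

lemma m_indep_imp_independent_coord_restr:
  assumes "m_indep E V B" and "finite E"
  shows "inj_on (coord_restr V) B" and "fscale.independent (coord_restr V ` B)"
proof -
  have "B \<subseteq> E" and dim: "fscale.dim (coord_restr V ` B) = card B"
    using assms(1) by (simp_all add: m_indep_def mrank_def)
  have "finite B"
    using \<open>B \<subseteq> E\<close> assms(2) by (rule finite_subset)
  then have "fscale.dim (coord_restr V ` B) \<le> card (coord_restr V ` B)"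
    by (simp add: fscale.dim_le_card')
  moreover have "card (coord_restr V ` B) \<le> card B"
    using \<open>finite B\<close> by (rule card_image_le)
  ultimately have card_eq: "card (coord_restr V ` B) = card B"
    using dim by simp
  show "inj_on (coord_restr V) B"
    using \<open>finite B\<close> card_eq by (rule eq_card_imp_inj_on)
  show "fscale.independent (coord_restr V ` B)"
    using \<open>finite B\<close> dim card_eq by (intro fscale.independent_if_dim_eq_card) simp_all
qed

lemma m_indep_imp_coords_independent_on:
  assumes "m_indep E V B" and "finite E"
  shows "coords_independent_on V B"
  unfolding coords_independent_on_def
proof (intro allI impI)
  let ?D = "coord_restr V"
  fix \<mu> assume vanish: "\<forall>v\<in>V. (\<Sum>b\<in>B. \<mu> b * v b) = 0"
  have "finite B"
    using assms by (auto simp: m_indep_def dest: finite_subset)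
  have inj: "inj_on ?D B" and indep: "fscale.independent (?D ` B)"
    using m_indep_imp_independent_coord_restr[OF assms] by simp_all
  define u where "u \<phi> = \<mu> (the_inv_into B ?D \<phi>)" for \<phi>
  have u_D: "u (?D b) = \<mu> b" if "b \<in> B" for b
    using the_inv_into_f_f[OF inj that] by (simp add: u_def)
  have "(\<Sum>\<phi>\<in>?D ` B. fscale (u \<phi>) \<phi>) = (\<Sum>b\<in>B. fscale (\<mu> b) (?D b))"
    by (simp add: sum.reindex[OF inj] u_D)
  also have "\<dots> = 0"
  proof
    fix v
    show "(\<Sum>b\<in>B. fscale (\<mu> b) (?D b)) v = 0 v"
      using vanish by (cases "v \<in> V") (simp_all add: sum_apply coord_restr_def)
  qed
  finally have sum_0: "(\<Sum>\<phi>\<in>?D ` B. fscale (u \<phi>) \<phi>) = 0" .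
  have "fscale.dependent (?D ` B)" if "\<exists>\<phi>\<in>?D ` B. u \<phi> \<noteq> 0"
    unfolding fscale.dependent_finite[OF finite_imageI[OF \<open>finite B\<close>]]
    by (intro exI[of _ u] conjI that sum_0)
  then have "\<forall>\<phi>\<in>?D ` B. u \<phi> = 0"
    using indep by blast
  then show "\<forall>b\<in>B. \<mu> b = 0"
    using u_D by simp
qed

lemma m_basis_imp_coord_restr_in_span:
  assumes "m_basis E V B" and "finite E" and "e \<in> E"
  shows "coord_restr V e \<in> fscale.span (coord_restr V ` B)"
proof (rule ccontr)
  let ?D = "coord_restr V"
  assume not_in_span: "?D e \<notin> fscale.span (?D ` B)"
  have indep_B: "m_indep E V B"
    using assms(1) by (simp add: m_basis_def)
  then have "B \<subseteq> E" and "finite B"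
    using assms(2) by (auto simp: m_indep_def dest: finite_subset)
  have "e \<notin> B"
  proof
    assume "e \<in> B"
    then have "?D e \<in> fscale.span (?D ` B)"
      by (intro fscale.span_base imageI)
    with not_in_span show False ..
  qed
  have maximal: "\<not> m_indep E V (insert e B)"
    using assms(1,3) \<open>B \<subseteq> E\<close> \<open>e \<notin> B\<close> unfolding m_basis_def by blast
  have "fscale.independent (insert (?D e) (?D ` B))"
    using not_in_span m_indep_imp_independent_coord_restr(2)[OF indep_B assms(2)]
    by (rule fscale.independent_insertI)
  then have "mrank V (insert e B) = card (insert (?D e) (?D ` B))"
    by (simp add: mrank_def fscale.dim_eq_card_independent)
  also have "\<dots> = Suc (card (?D ` B))"
  proof -
    have "?D e \<notin> ?D ` B"
      using not_in_span fscale.span_base[of "?D e" "?D ` B"] by blast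
    then show ?thesis
      using \<open>finite B\<close> by simp
  qed
  also have "\<dots> = card (insert e B)"
    using card_image[OF m_indep_imp_independent_coord_restr(1)[OF indep_B assms(2)]]
      \<open>finite B\<close> \<open>e \<notin> B\<close> by simp
  finally have "m_indep E V (insert e B)"
    using \<open>B \<subseteq> E\<close> assms(3) by (simp add: m_indep_def)
  then show False
    using maximal \<open>e \<notin> B\<close> by blast
qed

lemma m_basis_imp_eq_0_if_vanishes:
  assumes "lin_subspace_of E V" and "m_basis E V B" and "finite E"
    and "v \<in> V" and "\<forall>b\<in>B. v b = 0"
  shows "v = 0"
proof
  fix e
  show "v e = 0 e"
  proof (cases "e \<in> E")
    case True
    have "fscale.subspace {\<phi>. \<phi> v = 0}"
      by (simp add: fscale.subspace_def)
    moreover have "coord_restr V ` B \<subseteq> {\<phi>. \<phi> v = 0}"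
      using assms(4,5) by (auto simp: coord_restr_def)
    ultimately have "fscale.span (coord_restr V ` B) \<subseteq> {\<phi>. \<phi> v = 0}"
      by (intro fscale.span_minimal)
    then have "coord_restr V e v = 0"
      using m_basis_imp_coord_restr_in_span[OF assms(2,3) True] by blast
    then show ?thesis
      using assms(4) by (simp add: coord_restr_def)
  next
    case False
    then show ?thesis
      using assms(1,4) by (auto simp: lin_subspace_of_def fn_space_def)
  qed
qed

lemma m_basis_obtains_dual_family:
  assumes "lin_subspace_of E V" and "finite E" and "m_basis E V B"
  obtains w where "dual_family_on V B w"
proof (rule dual_family_on_exists)
  show "fscale.subspace V"
    using assms(1) by (simp add: lin_subspace_of_def)
  show "finite B"
    using assms(2,3) by (auto simp: m_basis_def m_indep_def dest: finite_subset)
  show "coords_independent_on V B"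
    using assms(2,3) by (auto simp: m_basis_def intro: m_indep_imp_coords_independent_on)
qed

lemma m_basis_imp_exists_extension:
  assumes "lin_subspace_of E V" and "finite E" and "m_basis E V B"
  shows "\<exists>v\<in>V. \<forall>b\<in>B. v b = y b"
proof -
  obtain w where w: "dual_family_on V B w"
    using m_basis_obtains_dual_family[OF assms] .
  have "finite B" and "fscale.subspace V"
    using assms by (auto simp: m_basis_def m_indep_def lin_subspace_of_def dest: finite_subset)
  then have "(\<Sum>b\<in>B. fscale (y b) (w b)) \<in> V"
    using w by (auto simp: dual_family_on_def intro!: fscale.subspace_sum fscale.subspace_scale)
  then show ?thesis
    using dual_family_on_sum_apply[OF w \<open>finite B\<close>] by blast
qed

lemma vdim_le_card_m_basis:
  assumes "lin_subspace_of E V" and "finite E" and "m_basis E V B"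
  shows "vdim V \<le> card B"
proof -
  obtain w where w: "dual_family_on V B w"
    using m_basis_obtains_dual_family[OF assms] .
  have "finite B" and V: "fscale.subspace V"
    using assms by (auto simp: m_basis_def m_indep_def lin_subspace_of_def dest: finite_subset)
  have "V \<subseteq> fscale.span (w ` B)"
  proof
    fix v assume "v \<in> V"
    let ?p = "\<Sum>b\<in>B. fscale (v b) (w b)"
    have "v - ?p = 0"
      using dual_family_on_residual[OF V \<open>finite B\<close> w \<open>v \<in> V\<close>]
      by (intro m_basis_imp_eq_0_if_vanishes[OF assms(1,3,2)])
    then have "v = ?p"
      by simp
    also have "?p \<in> fscale.span (w ` B)"
      by (intro fscale.span_sum fscale.span_scale fscale.span_base imageI)
    finally show "v \<in> fscale.span (w ` B)" .
  qed
  then have "vdim V \<le> card (w ` B)"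
    unfolding vdim_def using \<open>finite B\<close> by (intro fscale.dim_le_card) simp_all
  also have "\<dots> \<le> card B"
    using \<open>finite B\<close> by (rule card_image_le)
  finally show ?thesis .
qed

section \<open>Families of matrices free outside few positions\<close>

definition free_outside :: "('b \<Rightarrow> 'a) set \<Rightarrow> 'b set \<Rightarrow> 'b set \<Rightarrow> bool" where
  "free_outside K E N \<longleftrightarrow> (\<forall>y. \<exists>X\<in>K. \<forall>e\<in>E - N. X e = y e)"

lemma free_outside_lin_variety_m_cobasis:
  assumes "lin_subspace_of E V" and "finite E" and "m_cobasis E V C"
  shows "free_outside (lin_variety E s V) E C"
  unfolding free_outside_def
proof
  fix y
  obtain B where basis: "m_basis E V B" and C: "C = E - B"
    using assms(3) by (auto simp: m_cobasis_def)
  then have "E - C = B"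
    by (auto simp: m_basis_def m_indep_def)
  obtain v where "v \<in> V" and "\<forall>b\<in>B. v b = y b - s b"
    using m_basis_imp_exists_extension[OF assms(1,2) basis, of "y - s"] by auto
  then have "s + v \<in> lin_variety E s V" and "\<forall>e\<in>E - C. (s + v) e = y e"
    using \<open>E - C = B\<close> by (auto simp: lin_variety_def)
  then show "\<exists>X\<in>lin_variety E s V. \<forall>e\<in>E - C. X e = y e"
    by blast
qed

lemma card_m_cobasis_le:
  assumes "lin_subspace_of E V" and "finite E" and "m_cobasis E V C"
  shows "card C \<le> card E - vdim V"
proof -
  obtain B where basis: "m_basis E V B" and C: "C = E - B"
    using assms(3) by (auto simp: m_cobasis_def)
  then have "card C = card E - card B"
    using assms(2) by (auto simp: m_basis_def m_indep_def intro: card_Diff_subset dest: finite_subset)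
  then show ?thesis
    using vdim_le_card_m_basis[OF assms(1,2) basis] by simp
qed

definition unit_column_minors ::
  "nat \<Rightarrow> nat \<Rightarrow> nat \<Rightarrow> (nat \<times> nat \<Rightarrow> 'a::zero_neq_one) set \<Rightarrow> (nat \<times> nat \<Rightarrow> 'a) set" where
  "unit_column_minors n i j K =
     {delete_row_col i j X | X. X \<in> K \<and> (\<forall>r\<in>{1..n}. X (r, j) = (if r = i then 1 else 0))}"

definition minor_support :: "nat \<Rightarrow> nat \<Rightarrow> nat \<Rightarrow> nat \<Rightarrow> (nat \<times> nat) set \<Rightarrow> (nat \<times> nat) set" where
  "minor_support n k i j N = {e \<in> grid (n - 1) k. map_prod (insert_index i) (insert_index j) e \<in> N}"

lemma free_outside_unit_column_minors:
  assumes free: "free_outside K (grid n (Suc k)) N" and i: "i \<in> {1..n}" and j: "j \<in> {1..Suc k}"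
    and column_j: "\<forall>r. (r, j) \<notin> N"
  shows "free_outside (unit_column_minors n i j K) (grid (n - 1) k) (minor_support n k i j N)"
  unfolding free_outside_def
proof
  fix y' :: "nat \<times> nat \<Rightarrow> 'a"
  define y where "y = (\<lambda>(r, c). if c = j then (if r = i then 1 else 0) else y' (delete_index i r, delete_index j c))"
  obtain X where "X \<in> K" and X_y: "\<forall>e\<in>grid n (Suc k) - N. X e = y e"
    using free unfolding free_outside_def by blast
  have "\<forall>r\<in>{1..n}. X (r, j) = (if r = i then 1 else 0)"
    using X_y j column_j by (auto simp: grid_def y_def)
  then have "delete_row_col i j X \<in> unit_column_minors n i j K"
    using \<open>X \<in> K\<close> unfolding unit_column_minors_def by blast
  moreover have "delete_row_col i j X e = y' e" if "e \<in> grid (n - 1) k - minor_support n k i j N" for e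
  proof -
    obtain a b where e: "e = (a, b)"
      by fastforce
    then have "(insert_index i a, insert_index j b) \<in> grid n (Suc k) - N"
      using that i j by (auto simp: grid_def minor_support_def insert_index_def)
    then show ?thesis
      using X_y by (simp add: e delete_row_col_def y_def)
  qed
  ultimately show "\<exists>Y\<in>unit_column_minors n i j K. \<forall>e\<in>grid (n - 1) k - minor_support n k i j N. Y e = y' e"
    by blast
qed

lemma card_minor_support_le:
  assumes "finite N"
  shows "card (minor_support n k i j N) + card (N \<inter> ({i} \<times> UNIV)) \<le> card N"
proof -
  let ?g = "map_prod (insert_index i) (insert_index j)"
  have "inj_on ?g (UNIV \<times> UNIV)"
    by (intro map_prod_inj_on insert_index_inj_on)
  then have "inj_on ?g (minor_support n k i j N)"
    by (rule inj_on_subset) simp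
  moreover have "?g ` minor_support n k i j N \<subseteq> N - N \<inter> ({i} \<times> UNIV)"
    by (auto simp: minor_support_def)
  ultimately have "card (minor_support n k i j N) \<le> card (N - N \<inter> ({i} \<times> UNIV))"
    using assms by (intro card_inj_on_le) simp_all
  also have "\<dots> = card N - card (N \<inter> ({i} \<times> UNIV))"
    using assms by (intro card_Diff_subset) auto
  finally show ?thesis
    using card_mono[OF assms, of "N \<inter> ({i} \<times> UNIV)"] by auto
qed

lemma exists_cullis_det_ne_0_from_minors:
  fixes K :: "(nat \<times> nat \<Rightarrow> 'a::comm_ring_1) set"
  assumes free: "free_outside K (grid n (Suc k)) N" and i: "i \<in> {1..n}" and j: "j \<in> {1..Suc k}"
    and column_j: "\<forall>r. (r, j) \<notin> N"
    and minors: "\<And>K' :: (nat \<times> nat \<Rightarrow> 'a) set. free_outside K' (grid (n - 1) k) (minor_support n k i j N)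
      \<Longrightarrow> \<exists>Y\<in>K'. cullis_det (n - 1) k Y \<noteq> 0"
  shows "\<exists>X\<in>K. cullis_det n (Suc k) X \<noteq> 0"
proof -
  obtain Y where "Y \<in> unit_column_minors n i j K" and "cullis_det (n - 1) k Y \<noteq> 0"
    using minors[OF free_outside_unit_column_minors[OF free i j column_j]] by blast
  then obtain X where "X \<in> K" and unit: "\<forall>r\<in>{1..n}. X (r, j) = (if r = i then 1 else 0)"
    and "Y = delete_row_col i j X"
    unfolding unit_column_minors_def by blast
  then have "cullis_det n (Suc k) X = (- 1) ^ (i + j) * cullis_det (n - 1) k Y"
    using cullis_det_unit_column[OF i _ _ unit] j by auto
  then have "cullis_det n (Suc k) X \<noteq> 0"
    using \<open>cullis_det (n - 1) k Y \<noteq> 0\<close> by (cases "even (i + j)") simp_all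
  then show ?thesis
    using \<open>X \<in> K\<close> by blast
qed

lemma exists_column_avoiding:
  assumes "finite N" and "card N < k"
  obtains j where "j \<in> {1..k}" and "\<forall>r. (r, j) \<notin> N"
proof -
  have "\<not> {1..k} \<subseteq> snd ` N"
  proof
    assume "{1..k} \<subseteq> snd ` N"
    then have "k \<le> card (snd ` N)"
      using card_mono[OF finite_imageI[OF \<open>finite N\<close>]] by fastforce
    also have "\<dots> \<le> card N"
      using \<open>finite N\<close> by (rule card_image_le)
    finally show False
      using assms(2) by simp
  qed
  then show ?thesis
    using that by force
qed

lemma exists_cullis_det_ne_0:
  fixes K :: "(nat \<times> nat \<Rightarrow> 'a::comm_ring_1) set"
  assumes "free_outside K (grid n k) N" and "N \<subseteq> grid n k" and "k \<le> n" and "card N < k"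
  shows "\<exists>X\<in>K. cullis_det n k X \<noteq> 0"
  using assms
proof (induction k arbitrary: n K N)
  case 0
  then show ?case
    by simp
next
  case (Suc k)
  have "finite N"
    using Suc.prems(2) by (rule finite_subset) (simp add: grid_def)
  obtain j where j: "j \<in> {1..Suc k}" and column_j: "\<forall>r. (r, j) \<notin> N"
    using exists_column_avoiding[OF \<open>finite N\<close> Suc.prems(4)] .
  obtain i where i: "i \<in> {1..n}" and row_i: "N \<noteq> {} \<Longrightarrow> 0 < card (N \<inter> ({i} \<times> UNIV))"
  proof (cases "N = {}")
    case True
    then show ?thesis
      using that[of 1] Suc.prems(3) by simp
  next
    case False
    then obtain e where "e \<in> N"
      by blast
    then have "fst e \<in> {1..n}" and "0 < card (N \<inter> ({fst e} \<times> UNIV))"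
      using Suc.prems(2) \<open>finite N\<close> by (auto simp: grid_def mem_Times_iff card_gt_0_iff)
    then show ?thesis
      using that by blast
  qed
  show ?case
  proof (rule exists_cullis_det_ne_0_from_minors[OF Suc.prems(1) i j column_j])
    fix K' :: "(nat \<times> nat \<Rightarrow> 'a) set"
    assume free': "free_outside K' (grid (n - 1) k) (minor_support n k i j N)"
    show "\<exists>Y\<in>K'. cullis_det (n - 1) k Y \<noteq> 0"
    proof (cases "k = 0")
      case True
      obtain Y where "Y \<in> K'"
        using free' unfolding free_outside_def by blast
      then show ?thesis
        using True by (auto simp: cullis_det_0)
    next
      case False
      have "card (minor_support n k i j N) < k"
        using card_minor_support_le[OF \<open>finite N\<close>, of n k i j] Suc.prems(4) row_i False
        by (cases "N = {}") auto
      then show ?thesis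
        using Suc.prems(3) by (intro Suc.IH[OF free']) (auto simp: minor_support_def)
    qed
  qed
qed

lemma exists_cullis_det_ne_0_if_crowded_row:
  fixes K :: "(nat \<times> nat \<Rightarrow> 'a::comm_ring_1) set"
  assumes free: "free_outside K (grid n (Suc k)) N" and "N \<subseteq> grid n (Suc k)"
    and "Suc k \<le> n" and "card N \<le> Suc k"
    and i: "i \<in> {1..n}" and crowded: "2 \<le> card (N \<inter> ({i} \<times> UNIV))"
    and j: "j \<in> {1..Suc k}" and column_j: "\<forall>r. (r, j) \<notin> N"
  shows "\<exists>X\<in>K. cullis_det n (Suc k) X \<noteq> 0"
proof (rule exists_cullis_det_ne_0_from_minors[OF free i j column_j])
  fix K' :: "(nat \<times> nat \<Rightarrow> 'a) set"
  assume "free_outside K' (grid (n - 1) k) (minor_support n k i j N)"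
  moreover have "finite N"
    using assms(2) by (rule finite_subset) (simp add: grid_def)
  then have "card (minor_support n k i j N) < k"
    using card_minor_support_le[of N n k i j] assms(4) crowded by simp
  ultimately show "\<exists>Y\<in>K'. cullis_det (n - 1) k Y \<noteq> 0"
    using assms(3) by (intro exists_cullis_det_ne_0) (auto simp: minor_support_def)
qed

theorem mainTheorem4:
  fixes n k j' :: nat and s :: "nat \<times> nat \<Rightarrow> 'a::field"
    and V :: "(nat \<times> nat \<Rightarrow> 'a) set" and K :: "(nat \<times> nat \<Rightarrow> 'a) set"
    and Bstar :: "(nat \<times> nat) set"
  assumes "1 < k" and "k \<le> n"
    and "lin_subspace_of (grid n k) V" and "s \<in> fn_space (grid n k)"
    and "K = lin_variety (grid n k) s V"
    and "n * k - vdim V = k"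
    and "\<forall>X\<in>K. cullis_det n k X = 0"
    and "m_cobasis (grid n k) V Bstar"
    and "1 \<le> j'" and "j' \<le> k" and "Bstar \<inter> ({1..n} \<times> {j'}) = {}"
  shows "\<forall>i. 1 \<le> i \<and> i \<le> n \<longrightarrow> card (Bstar \<inter> ({i} \<times> {1..k})) \<le> 1"
proof (intro allI impI)
  fix i assume i: "1 \<le> i \<and> i \<le> n"
  have finite_grid: "finite (grid n k)"
    by (simp add: grid_def)
  have free: "free_outside K (grid n k) Bstar"
    using free_outside_lin_variety_m_cobasis[OF assms(3) finite_grid assms(8)] assms(5) by simp
  have "card Bstar \<le> k"
    using card_m_cobasis_le[OF assms(3) finite_grid assms(8)] assms(6)
    by (simp add: grid_def card_cartesian_product)
  have "Bstar \<subseteq> grid n k"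
    using assms(8) by (auto simp: m_cobasis_def)
  then have row_i: "Bstar \<inter> ({i} \<times> UNIV) = Bstar \<inter> ({i} \<times> {1..k})"
    and column_j': "\<forall>r. (r, j') \<notin> Bstar"
    using assms(11) by (auto simp: grid_def)
  obtain k' where k: "k = Suc k'"
    using assms(1) by (cases k) auto
  show "card (Bstar \<inter> ({i} \<times> {1..k})) \<le> 1"
  proof (rule ccontr)
    assume "\<not> card (Bstar \<inter> ({i} \<times> {1..k})) \<le> 1"
    then have "\<exists>X\<in>K. cullis_det n k X \<noteq> 0"
      using exists_cullis_det_ne_0_if_crowded_row[of K n k' Bstar i j'] free \<open>Bstar \<subseteq> grid n k\<close>
        \<open>card Bstar \<le> k\<close> row_i column_j' i assms(2,9,10) k by simp
    then show False
      using assms(7) by simp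
  qed
qed

end
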